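(* Let $n\ge 2$, and let $S$ be a semitransitive subsemigroup of $\mathcal{I}_n\setminus\mathcal{S}_n$ with $|S|\le 2n$, with non-zero idempotents $g,h$ and transitivity blocks $X_1,\dots,X_m$. Let $t=\min_{1\le i\le m}|X_i|$ and $N=(gSh\cup hSg)\setminus\{0\}$. Then $|N|\ge n-t$.
   Context: $\mathcal{I}_n$ denotes the symmetric inverse semigroup of all partial injective maps of $X=\{1,\dots,n\}$ to itself, with maps written on the right and composed left to right; $0$ denotes the empty map. $\mathcal{S}_n$ is the symmetric group on $X$. A semigroup $S$ of partial transformations of $X$ is semitransitive if for all $x,y\in X$ there is $\varphi\in S$ with $x\varphi=y$ or $y\varphi=x$. It is known that such an $S$ (semitransitive in $\mathcal{I}_n\setminus\mathcal{S}_n$, $|S|\le 2n$) has exactly two non-zero idempotents $g,h$, with disjoint domains whose union is $X$. For $x,y\in X$ write $x\ge y$ if $x\varphi=y$ for some $\varphi\in S$; this is a total preorder, and its equivalence classes are the transitivity blocks $X_1,\dots,X_m$, numbered so that for $x\in X_i$, $y\in X_j$ one has $x\ge y$ iff $i\le j$. $gSh=\{g\sigma h:\sigma\in S\}$, and similarly $hSg$. *)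

theory Defs
  imports Main
begin

definition pinj :: "nat \<Rightarrow> (nat \<rightharpoonup> nat) \<Rightarrow> bool" where
  "pinj n f \<longleftrightarrow> dom f \<subseteq> {1..n} \<and> ran f \<subseteq> {1..n} \<and> inj_on f (dom f)"

definition symInv :: "nat \<Rightarrow> (nat \<rightharpoonup> nat) set" where
  "symInv n = {f. pinj n f}"

text \<open>The symmetric group S_n, as the total (hence bijective) elements of I_n.\<close>
definition symGrp :: "nat \<Rightarrow> (nat \<rightharpoonup> nat) set" where
  "symGrp n = {f \<in> symInv n. dom f = {1..n}}"

text \<open>Composition with maps written on the right: x (f * g) = (x f) g.\<close>
definition pcomp :: "(nat \<rightharpoonup> nat) \<Rightarrow> (nat \<rightharpoonup> nat) \<Rightarrow> (nat \<rightharpoonup> nat)" (infixl "\<cdot>" 70) where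
  "f \<cdot> g = g \<circ>\<^sub>m f"

definition subsemigroup :: "(nat \<rightharpoonup> nat) set \<Rightarrow> bool" where
  "subsemigroup S \<longleftrightarrow> (\<forall>a\<in>S. \<forall>b\<in>S. a \<cdot> b \<in> S)"

definition semitransitive :: "nat \<Rightarrow> (nat \<rightharpoonup> nat) set \<Rightarrow> bool" where
  "semitransitive n S \<longleftrightarrow>
     (\<forall>x\<in>{1..n}. \<forall>y\<in>{1..n}. \<exists>\<phi>\<in>S. \<phi> x = Some y \<or> \<phi> y = Some x)"

text \<open>Non-zero idempotents of S (0 is the empty map).\<close>
definition nz_idempotents :: "(nat \<rightharpoonup> nat) set \<Rightarrow> (nat \<rightharpoonup> nat) set" where
  "nz_idempotents S = {e \<in> S. e \<cdot> e = e \<and> e \<noteq> Map.empty}"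

text \<open>The preorder x \<ge> y iff x \<phi> = y for some \<phi> in S.\<close>
definition reach :: "(nat \<rightharpoonup> nat) set \<Rightarrow> nat \<Rightarrow> nat \<Rightarrow> bool" where
  "reach S x y \<longleftrightarrow> (\<exists>\<phi>\<in>S. \<phi> x = Some y)"

definition blocks :: "nat \<Rightarrow> (nat \<rightharpoonup> nat) set \<Rightarrow> nat set set" where
  "blocks n S = (\<lambda>x. {y \<in> {1..n}. reach S x y \<and> reach S y x}) ` {1..n}"

definition sandwich :: "(nat \<rightharpoonup> nat) \<Rightarrow> (nat \<rightharpoonup> nat) set \<Rightarrow> (nat \<rightharpoonup> nat) \<Rightarrow> (nat \<rightharpoonup> nat) set" where
  "sandwich a S b = {a \<cdot> \<sigma> \<cdot> b | \<sigma>. \<sigma> \<in> S}"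

end

theory Submission
  imports Defs
begin

(* The two non-zero idempotents g, h are the partial identities of a splitting
   X = A \<union> B into two colour classes, and N = (gSh \<union> hSg) - {0} is the set of non-zero maps
   of S carrying one colour class into the other ("crossing maps").  We prove the stronger
   statement |N| \<ge> |X| - |X_i| for EVERY block X_i, in a setting (locale two_coloured) that
   is closed under two operations:
   - inversion of all maps, which reverses the preorder and so exchanges top and bottom;
   - restriction to X - D for a bottom block D, which keeps all other blocks.
   The proof is by induction on |X|.  Let D and U be the bottom and top blocks and x0 \<in> X_i.
   If D meets both colours, every point is sent to a bottom point of the other colour by its
   own crossing map, so |N| \<ge> |X|.  If D lies in one colour class without exhausting it and
   x0 \<notin> D, peeling D off loses |D| points and at least |D| crossing maps.  Dually for U.
   In the remaining configurations x0 lies in one extreme block while the other one is a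
   whole colour class, and |X| - |X_i| crossing maps are exhibited directly. *)

section \<open>Partial maps\<close>

lemma pcomp_Some: "(f \<cdot> g) x = Some z \<longleftrightarrow> (\<exists>y. f x = Some y \<and> g y = Some z)"
  by (auto simp: pcomp_def map_comp_Some_iff)

lemma pcomp_assoc: "(f \<cdot> g) \<cdot> h = f \<cdot> (g \<cdot> h)"
  by (rule ext) (simp add: pcomp_def map_comp_def split: option.split)

lemma map_eqI: "(\<And>x z. f x = Some z \<longleftrightarrow> g x = Some z) \<Longrightarrow> f = g"
  by (rule ext) (metis option.exhaust)

text \<open>The partial identity on a set; the idempotents of \<open>\<I>\<^sub>n\<close> are exactly these maps.\<close>
definition id_on :: "nat set \<Rightarrow> (nat \<rightharpoonup> nat)" where
  "id_on A x = (if x \<in> A then Some x else None)"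

lemma id_on_Some [simp]: "id_on A x = Some y \<longleftrightarrow> x \<in> A \<and> y = x"
  by (auto simp: id_on_def)

lemma dom_id_on [simp]: "dom (id_on A) = A"
  by (auto simp: id_on_def dom_def)

lemma id_on_comp: "id_on A \<cdot> id_on B = id_on (A \<inter> B)"
  by (rule map_eqI) (auto simp: pcomp_Some)

lemma id_on_sandwich: "dom f \<subseteq> A \<Longrightarrow> ran f \<subseteq> B \<Longrightarrow> id_on A \<cdot> f \<cdot> id_on B = f"
  by (rule map_eqI) (auto simp: pcomp_Some ran_def)

definition partial_inj :: "nat set \<Rightarrow> (nat \<rightharpoonup> nat) \<Rightarrow> bool" where
  "partial_inj X f \<longleftrightarrow> dom f \<subseteq> X \<and> ran f \<subseteq> X \<and> inj_on f (dom f)"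

lemma partial_injI:
  "(\<And>x y. f x = Some y \<Longrightarrow> x \<in> X \<and> y \<in> X) \<Longrightarrow> (\<And>x x' y. f x = Some y \<Longrightarrow> f x' = Some y \<Longrightarrow> x = x')
     \<Longrightarrow> partial_inj X f"
  unfolding partial_inj_def inj_on_def dom_def ran_def by force

lemma partial_inj_into: "partial_inj X f \<Longrightarrow> f x = Some y \<Longrightarrow> x \<in> X \<and> y \<in> X"
  unfolding partial_inj_def by (auto intro: ranI)

lemma partial_inj_inj: "partial_inj X f \<Longrightarrow> f x = Some y \<Longrightarrow> f x' = Some y \<Longrightarrow> x = x'"
  unfolding partial_inj_def by (metis domI inj_on_def)

lemma finite_partial_injs:
  assumes "finite X"
  shows "finite {f. partial_inj X f}"
proof -
  have "finite {f. dom f = D \<and> ran f \<subseteq> X}" if "D \<subseteq> X" for D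
    using that assms by (intro finite_set_of_finite_maps) (auto intro: finite_subset)
  then have "finite (\<Union>D\<in>Pow X. {f. dom f = D \<and> ran f \<subseteq> X})"
    using assms by simp
  moreover have "{f. partial_inj X f} \<subseteq> (\<Union>D\<in>Pow X. {f. dom f = D \<and> ran f \<subseteq> X})"
    unfolding partial_inj_def by blast
  ultimately show ?thesis by (rule finite_subset[rotated])
qed

lemma idempotent_is_id_on:
  assumes inj: "partial_inj X e" and idem: "e \<cdot> e = e"
  shows "e = id_on (dom e)"
proof -
  have fixed: "y = x" if ex: "e x = Some y" for x y
  proof -
    have "(e \<cdot> e) x = Some y" using idem ex by simp
    then have "e y = Some y" using ex by (simp add: pcomp_Some)
    then show ?thesis using partial_inj_inj[OF inj ex] by simp
  qed
  show ?thesis by (rule map_eqI) (auto simp: domIff dest: fixed)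
qed

definition inv_map :: "(nat \<rightharpoonup> nat) \<Rightarrow> (nat \<rightharpoonup> nat)" where
  "inv_map f y = (if y \<in> ran f then Some (THE x. f x = Some y) else None)"

lemma inv_map_Some:
  assumes "partial_inj X f"
  shows "inv_map f y = Some x \<longleftrightarrow> f x = Some y"
proof -
  have "(THE x. f x = Some y) = x" if "f x = Some y" for x
    using that partial_inj_inj[OF assms] by blast
  then show ?thesis by (auto simp: inv_map_def ran_def)
qed

lemma partial_inj_inv_map: "partial_inj X f \<Longrightarrow> partial_inj X (inv_map f)"
  by (rule partial_injI) (auto simp: inv_map_Some dest: partial_inj_into partial_inj_inj)

lemma inv_map_inv_map: "partial_inj X f \<Longrightarrow> inv_map (inv_map f) = f"
  by (rule map_eqI) (simp add: inv_map_Some[of X] partial_inj_inv_map)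

lemma dom_inv_map: "partial_inj X f \<Longrightarrow> dom (inv_map f) = ran f"
  by (auto simp: inv_map_Some ran_def)

lemma ran_inv_map: "partial_inj X f \<Longrightarrow> ran (inv_map f) = dom f"
  by (auto simp: inv_map_Some ran_def)

lemma partial_inj_comp: "partial_inj X f \<Longrightarrow> partial_inj X g \<Longrightarrow> partial_inj X (f \<cdot> g)"
  by (rule partial_injI) (auto simp: pcomp_Some dest: partial_inj_into partial_inj_inj)

lemma inv_map_comp:
  "partial_inj X f \<Longrightarrow> partial_inj X g \<Longrightarrow> inv_map (f \<cdot> g) = inv_map g \<cdot> inv_map f"
  by (rule map_eqI) (auto simp: inv_map_Some[of X] partial_inj_comp pcomp_Some)

lemma inv_map_id_on: "A \<subseteq> X \<Longrightarrow> inv_map (id_on A) = id_on A"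
proof -
  assume "A \<subseteq> X"
  then have "partial_inj X (id_on A)" by (intro partial_injI) auto
  then show ?thesis by (intro map_eqI) (auto simp: inv_map_Some)
qed

definition restr :: "nat set \<Rightarrow> (nat \<rightharpoonup> nat) \<Rightarrow> (nat \<rightharpoonup> nat)" where
  "restr Y f x = (if x \<in> Y \<and> (\<exists>y\<in>Y. f x = Some y) then f x else None)"

lemma restr_Some: "restr Y f x = Some y \<longleftrightarrow> x \<in> Y \<and> y \<in> Y \<and> f x = Some y"
  by (auto simp: restr_def)

lemma restr_comp:
  assumes "\<And>y z. y \<notin> Y \<Longrightarrow> g y = Some z \<Longrightarrow> z \<notin> Y"
  shows "restr Y (f \<cdot> g) = restr Y f \<cdot> restr Y g"
  by (rule map_eqI) (use assms in \<open>auto simp: restr_Some pcomp_Some\<close>)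

lemma restr_id_on: "restr Y (id_on A) = id_on (A \<inter> Y)"
  by (rule map_eqI) (auto simp: restr_Some)

lemma restr_empty: "ran f \<inter> Y = {} \<Longrightarrow> restr Y f = Map.empty"
  by (rule map_eqI) (auto simp: restr_Some ran_def)

lemma partial_inj_restr: "partial_inj X f \<Longrightarrow> partial_inj Y (restr Y f)"
  by (rule partial_injI) (auto simp: restr_Some dest: partial_inj_inj)

section \<open>Two-coloured semitransitive semigroups\<close>

text \<open>The non-zero maps of \<open>S\<close> carrying one colour class into the other; for \<open>g = id_on A\<close>,
  \<open>h = id_on B\<close> this is \<open>(gSh \<union> hSg) \<setminus> {0}\<close> (lemma \<open>crossing_eq_sandwich\<close>).\<close>
definition crossing :: "(nat \<rightharpoonup> nat) set \<Rightarrow> nat set \<Rightarrow> nat set \<Rightarrow> (nat \<rightharpoonup> nat) set" where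
  "crossing S A B = {f \<in> S. f \<noteq> Map.empty \<and> (dom f \<subseteq> A \<and> ran f \<subseteq> B \<or> dom f \<subseteq> B \<and> ran f \<subseteq> A)}"

lemma crossing_swap: "crossing S A B = crossing S B A"
  unfolding crossing_def by blast

definition block :: "nat set \<Rightarrow> (nat \<rightharpoonup> nat) set \<Rightarrow> nat \<Rightarrow> nat set" where
  "block X S x = {y \<in> X. reach S x y \<and> reach S y x}"

lemma finite_total_preorder_greatest:
  assumes "finite Y" "Y \<noteq> {}"
    and refl: "\<And>x. x \<in> Y \<Longrightarrow> R x x" and trans: "\<And>x y z. R x y \<Longrightarrow> R y z \<Longrightarrow> R x z"
    and total: "\<And>x y. x \<in> Y \<Longrightarrow> y \<in> Y \<Longrightarrow> R x y \<or> R y x"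
  shows "\<exists>y\<in>Y. \<forall>v\<in>Y. R y v"
  using assms(1,2,3,5)
proof (induction Y rule: finite_ne_induct)
  case (singleton x)
  then show ?case by auto
next
  case (insert x F)
  then obtain y where y: "y \<in> F" "\<forall>v\<in>F. R y v" by auto
  have "R x y \<or> R y x" using insert.prems y(1) by blast
  then show ?case
  proof
    assume "R x y"
    then have "\<forall>v\<in>insert x F. R x v" using y(2) insert.prems(1) trans by blast
    then show ?case by blast
  next
    assume "R y x"
    then show ?case using y by blast
  qed
qed

lemma card_le_by_witness:
  assumes "finite T" and ex: "\<And>x. x \<in> Y \<Longrightarrow> \<exists>f\<in>T. P x f"
    and unique: "\<And>x x' f. x \<in> Y \<Longrightarrow> x' \<in> Y \<Longrightarrow> f \<in> T \<Longrightarrow> P x f \<Longrightarrow> P x' f \<Longrightarrow> x = x'"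
  shows "card Y \<le> card T"
proof -
  obtain F where F: "\<And>x. x \<in> Y \<Longrightarrow> F x \<in> T \<and> P x (F x)" using ex by metis
  have "inj_on F Y"
  proof (rule inj_onI)
    fix x x' assume "x \<in> Y" "x' \<in> Y" "F x = F x'"
    then show "x = x'" using F unique by metis
  qed
  moreover have "F ` Y \<subseteq> T" using F by blast
  ultimately show ?thesis using card_inj_on_le \<open>finite T\<close> by blast
qed

text \<open>Unlike the theorem, the setting is stable under restriction and inversion.\<close>
locale two_coloured =
  fixes X :: "nat set" and S :: "(nat \<rightharpoonup> nat) set" and A B :: "nat set"
  assumes finite_X: "finite X"
    and partial_inj: "\<phi> \<in> S \<Longrightarrow> partial_inj X \<phi>"
    and closed: "\<phi> \<in> S \<Longrightarrow> \<psi> \<in> S \<Longrightarrow> \<phi> \<cdot> \<psi> \<in> S"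
    and semitransitive: "x \<in> X \<Longrightarrow> y \<in> X \<Longrightarrow> \<exists>\<phi>\<in>S. \<phi> x = Some y \<or> \<phi> y = Some x"
    and cover: "A \<union> B = X" and disjoint: "A \<inter> B = {}"
    and A_ne: "A \<noteq> {}" and B_ne: "B \<noteq> {}"
    and id_A: "id_on A \<in> S" and id_B: "id_on B \<in> S"
begin

lemma swap: "two_coloured X S B A"
  using two_coloured_axioms unfolding two_coloured_def by blast

lemma maps_into: "\<phi> \<in> S \<Longrightarrow> \<phi> x = Some y \<Longrightarrow> x \<in> X \<and> y \<in> X"
  using partial_inj partial_inj_into by blast

lemma inj: "\<phi> \<in> S \<Longrightarrow> \<phi> x = Some y \<Longrightarrow> \<phi> x' = Some y \<Longrightarrow> x = x'"
  using partial_inj partial_inj_inj by blast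

lemma finite_S: "finite S"
  by (rule finite_subset[OF _ finite_partial_injs[OF finite_X]]) (use partial_inj in blast)

lemma finite_crossing: "finite (crossing S A B)"
  using finite_S unfolding crossing_def by simp

lemma reach_in_X: "reach S x y \<Longrightarrow> x \<in> X \<and> y \<in> X"
  unfolding reach_def using maps_into by blast

lemma reach_refl: "x \<in> X \<Longrightarrow> reach S x x"
  unfolding reach_def using semitransitive by blast

lemma reach_trans: "reach S x y \<Longrightarrow> reach S y z \<Longrightarrow> reach S x z"
proof -
  assume "reach S x y" "reach S y z"
  then obtain \<phi> \<psi> where "\<phi> \<in> S" "\<phi> x = Some y" "\<psi> \<in> S" "\<psi> y = Some z"
    unfolding reach_def by blast
  then have "\<phi> \<cdot> \<psi> \<in> S" "(\<phi> \<cdot> \<psi>) x = Some z" using closed by (auto simp: pcomp_Some)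
  then show "reach S x z" unfolding reach_def by blast
qed

lemma reach_total: "x \<in> X \<Longrightarrow> y \<in> X \<Longrightarrow> reach S x y \<or> reach S y x"
  unfolding reach_def using semitransitive by blast

lemma exists_top:
  assumes "Y \<subseteq> X" "Y \<noteq> {}"
  shows "\<exists>y\<in>Y. \<forall>v\<in>Y. reach S y v"
proof (rule finite_total_preorder_greatest)
  show "finite Y" using assms(1) finite_X by (rule finite_subset)
  show "reach S x x" if "x \<in> Y" for x using that assms(1) reach_refl by blast
  show "reach S x y \<or> reach S y x" if "x \<in> Y" "y \<in> Y" for x y using that assms(1) reach_total by blast
qed (use assms reach_trans in auto)

lemma exists_bottom:
  assumes "Y \<subseteq> X" "Y \<noteq> {}"
  shows "\<exists>y\<in>Y. \<forall>v\<in>Y. reach S v y"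
proof (rule finite_total_preorder_greatest[where R = "\<lambda>x y. reach S y x"])
  show "finite Y" using assms(1) finite_X by (rule finite_subset)
  show "reach S x x" if "x \<in> Y" for x using that assms(1) reach_refl by blast
  show "reach S y x \<or> reach S x y" if "x \<in> Y" "y \<in> Y" for x y using that assms(1) reach_total by blast
qed (use assms reach_trans in auto)

lemma bottom_block: "\<forall>v\<in>X. reach S v w \<Longrightarrow> block X S w = {v. reach S w v}"
  unfolding block_def using reach_in_X by blast

lemma block_subset: "block X S x \<subseteq> X"
  unfolding block_def by blast

lemma block_mem: "x \<in> X \<Longrightarrow> x \<in> block X S x"
  unfolding block_def using reach_refl by blast

lemma block_eq: "y \<in> block X S x \<Longrightarrow> block X S y = block X S x"
  unfolding block_def by (auto intro: reach_trans)

lemma crossing_same_colour: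
  "f \<in> crossing S A B \<Longrightarrow> x \<in> dom f \<Longrightarrow> x' \<in> dom f \<Longrightarrow> x \<in> A \<longleftrightarrow> x' \<in> A"
  unfolding crossing_def using disjoint by blast

lemma crossing_eq_sandwich:
  "(sandwich (id_on A) S (id_on B) \<union> sandwich (id_on B) S (id_on A)) - {Map.empty} = crossing S A B"
proof (intro equalityI subsetI)
  have cut: "id_on P \<cdot> \<sigma> \<cdot> id_on Q \<in> S \<and> dom (id_on P \<cdot> \<sigma> \<cdot> id_on Q) \<subseteq> P
      \<and> ran (id_on P \<cdot> \<sigma> \<cdot> id_on Q) \<subseteq> Q" if "\<sigma> \<in> S" "id_on P \<in> S" "id_on Q \<in> S" for \<sigma> P Q
    using that closed by (auto simp: pcomp_Some dom_def ran_def)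
  fix f assume "f \<in> (sandwich (id_on A) S (id_on B) \<union> sandwich (id_on B) S (id_on A)) - {Map.empty}"
  then obtain \<sigma> where "\<sigma> \<in> S" "f = id_on A \<cdot> \<sigma> \<cdot> id_on B \<or> f = id_on B \<cdot> \<sigma> \<cdot> id_on A" "f \<noteq> Map.empty"
    unfolding sandwich_def by blast
  then show "f \<in> crossing S A B"
    using cut[OF _ id_A id_B] cut[OF _ id_B id_A] unfolding crossing_def by blast
next
  fix f assume f: "f \<in> crossing S A B"
  then consider "dom f \<subseteq> A" "ran f \<subseteq> B" | "dom f \<subseteq> B" "ran f \<subseteq> A"
    unfolding crossing_def by blast
  then have "f = id_on A \<cdot> f \<cdot> id_on B \<or> f = id_on B \<cdot> f \<cdot> id_on A"
    by cases (simp_all add: id_on_sandwich)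
  then show "f \<in> (sandwich (id_on A) S (id_on B) \<union> sandwich (id_on B) S (id_on A)) - {Map.empty}"
    using f unfolding crossing_def sandwich_def by blast
qed

lemma cut_to_crossing:
  assumes "\<phi> \<in> S" "x \<in> A" "y \<in> B" "\<phi> x = Some y"
  shows "id_on A \<cdot> \<phi> \<cdot> id_on B \<in> crossing S A B \<and> (id_on A \<cdot> \<phi> \<cdot> id_on B) x = Some y
    \<and> ran (id_on A \<cdot> \<phi> \<cdot> id_on B) \<subseteq> ran \<phi>"
proof -
  let ?f = "id_on A \<cdot> \<phi> \<cdot> id_on B"
  have fx: "?f x = Some y" using assms(2-4) by (auto simp: pcomp_Some)
  have "?f \<in> S" using closed id_A id_B assms(1) by blast
  moreover have "dom ?f \<subseteq> A" "ran ?f \<subseteq> B" "ran ?f \<subseteq> ran \<phi>"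
    by (auto simp: pcomp_Some dom_def ran_def)
  ultimately show ?thesis using fx unfolding crossing_def by auto
qed

lemma cross_witness:
  assumes "x \<in> A" "y \<in> B" "reach S x y"
  shows "\<exists>f\<in>crossing S A B. f x = Some y"
  using assms cut_to_crossing unfolding reach_def by blast

text \<open>Pushing the range of a map below one of its values: the points of \<open>ran r\<close> strictly above
  \<open>y\<close> can be sent to \<open>y\<close> one at a time, which never enlarges the domain.\<close>
lemma descend:
  assumes "r \<in> S" "y \<in> ran r"
  shows "\<exists>r'\<in>S. y \<in> ran r' \<and> ran r' \<subseteq> {v. reach S y v} \<and> dom r' \<subseteq> dom r"
  using assms
proof (induction "card (ran r - {v. reach S y v})" arbitrary: r rule: less_induct)
  case less
  show ?case
  proof (cases "ran r \<subseteq> {v. reach S y v}")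
    case True
    then show ?thesis using less.prems by blast
  next
    case False
    then obtain v where v: "v \<in> ran r" "\<not> reach S y v" by blast
    have ranX: "ran r \<subseteq> X" using partial_inj[OF less.prems(1)] by (simp add: partial_inj_def)
    then have "reach S v y" using v reach_total less.prems(2) by blast
    then obtain s where s: "s \<in> S" "s v = Some y" unfolding reach_def by blast
    let ?r = "r \<cdot> s"
    have "y \<in> ran ?r" using v(1) s(2) by (auto simp: ran_def pcomp_Some)
    moreover have "dom ?r \<subseteq> dom r" by (auto simp: dom_def pcomp_Some)
    moreover have "card (ran ?r - {v. reach S y v}) < card (ran r - {v. reach S y v})"
    proof -
      let ?U = "ran r - {v. reach S y v}"
      have finU: "finite ?U" using ranX finite_X finite_subset by blast
      have "ran ?r - {v. reach S y v} \<subseteq> (\<lambda>v. the (s v)) ` (?U - {v})"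
      proof
        fix z assume z: "z \<in> ran ?r - {v. reach S y v}"
        then obtain v' where v': "v' \<in> ran r" "s v' = Some z" by (auto simp: ran_def pcomp_Some)
        have "reach S v' z" using s(1) v'(2) unfolding reach_def by blast
        then have "\<not> reach S y v'" using z reach_trans by blast
        moreover have "v' \<noteq> v" using s(2) v'(2) z reach_refl less.prems(2) ranX by auto
        ultimately show "z \<in> (\<lambda>v. the (s v)) ` (?U - {v})" using v' by force
      qed
      then have "card (ran ?r - {v. reach S y v}) \<le> card (?U - {v})"
        using finU by (meson card_image_le card_mono finite_Diff finite_imageI order_trans)
      also have "\<dots> < card ?U" using finU v by (intro card_Diff1_less) auto
      finally show ?thesis .
    qed
    ultimately show ?thesis using less.hyps closed[OF less.prems(1) s(1)] by (meson order_trans)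
  qed
qed

lemma top_witness:
  assumes x: "x \<in> A" "\<forall>a\<in>A. reach S x a" and y: "y \<in> B" "reach S x y"
  shows "\<exists>f\<in>crossing S A B. f x = Some y \<and> ran f \<subseteq> {v. reach S y v}"
proof -
  obtain \<phi> where \<phi>: "\<phi> \<in> S" "\<phi> x = Some y" using y(2) unfolding reach_def by blast
  let ?r = "id_on A \<cdot> \<phi> \<cdot> id_on B"
  have "?r \<in> S" "y \<in> ran ?r" using cut_to_crossing[OF \<phi>(1) x(1) y(1) \<phi>(2)]
    unfolding crossing_def by (auto intro: ranI)
  then obtain r where r: "r \<in> S" "y \<in> ran r" "ran r \<subseteq> {v. reach S y v}" "dom r \<subseteq> dom ?r"
    using descend by blast
  obtain x' where x': "r x' = Some y" using r(2) by (auto simp: ran_def)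
  have "x' \<in> A" using x' r(4) by (auto simp: pcomp_Some)
  then obtain \<alpha> where \<alpha>: "\<alpha> \<in> S" "\<alpha> x = Some x'" using x(2) unfolding reach_def by blast
  have "\<alpha> \<cdot> r \<in> S" "(\<alpha> \<cdot> r) x = Some y" using closed \<alpha> r(1) x' by (auto simp: pcomp_Some)
  moreover have "ran (\<alpha> \<cdot> r) \<subseteq> ran r" by (auto simp: ran_def pcomp_Some)
  ultimately show ?thesis using cut_to_crossing[of "\<alpha> \<cdot> r" x y] x(1) y(1) r(3) by blast
qed

text \<open>If the bottom block meets both colours, every point is sent by a crossing map to a bottom
  point of the other colour, and these maps are pairwise distinct: \<open>|N| \<ge> |X|\<close>.\<close>
lemma bottom_mixed_bound:
  assumes a: "a \<in> A" "\<forall>v\<in>X. reach S v a" and b: "b \<in> B" "\<forall>v\<in>X. reach S v b"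
  shows "card X \<le> card (crossing S A B)"
proof (rule card_le_by_witness[OF finite_crossing])
  let ?target = "\<lambda>x. if x \<in> A then b else a"
  show "\<exists>f\<in>crossing S A B. f x = Some (?target x)" if "x \<in> X" for x
  proof (cases "x \<in> A")
    case True
    then show ?thesis using cross_witness b that by auto
  next
    case False
    then have "x \<in> B" using that cover by blast
    then show ?thesis
      using two_coloured.cross_witness[OF swap] a that False crossing_swap by auto
  qed
  show "x = x'" if "f \<in> crossing S A B" "f x = Some (?target x)" "f x' = Some (?target x')"
    for x x' f
  proof -
    have "x \<in> A \<longleftrightarrow> x' \<in> A" using crossing_same_colour[OF that(1)] that(2,3) by blast
    then have "f x' = Some (?target x)" using that(3) by simp
    moreover have "f \<in> S" using that(1) unfolding crossing_def by blast
    ultimately show ?thesis using inj that(2) by blast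
  qed
qed

text \<open>If every point of \<open>A\<close> lies in the top block and the bottom block \<open>D\<close> avoids \<open>A\<close>, then
  \<open>|N| \<ge> |X| - |D|\<close>: each \<open>a \<in> A\<close> is sent to the bottom point \<open>w\<close> by a map with range in \<open>D\<close>,
  and each \<open>x \<in> B - D\<close> is reached from a fixed \<open>a\<^sub>0 \<in> A\<close>.\<close>
lemma top_colour_bound:
  assumes w: "w \<in> X" "\<forall>v\<in>X. reach S v w" and top: "\<forall>a\<in>A. \<forall>v\<in>X. reach S a v"
    and disj: "block X S w \<inter> A = {}"
  shows "card X - card (block X S w) \<le> card (crossing S A B)"
proof -
  define D where "D = block X S w"
  have D: "D = {v. reach S w v}" unfolding D_def using bottom_block w(2) .
  have "w \<in> B" using block_mem[OF w(1)] disj cover w(1) by blast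
  obtain a0 where a0: "a0 \<in> A" using A_ne by blast
  let ?P = "\<lambda>x f. if x \<in> A then f x = Some w \<and> ran f \<subseteq> D else f a0 = Some x"
  have "card (X - D) \<le> card (crossing S A B)"
  proof (rule card_le_by_witness[OF finite_crossing])
    show "\<exists>f\<in>crossing S A B. ?P x f" if x: "x \<in> X - D" for x
    proof (cases "x \<in> A")
      case True
      then have "\<forall>a\<in>A. reach S x a" "reach S x w" using top cover w(1) by blast+
      then show ?thesis using top_witness[OF True _ \<open>w \<in> B\<close>] True D by auto
    next
      case False
      then show ?thesis using cross_witness[OF a0, of x] top a0 x cover by auto
    qed
    show "x = x'" if x: "x \<in> X - D" "x' \<in> X - D" and f: "f \<in> crossing S A B"
      and P: "?P x f" "?P x' f" for x x' f
    proof -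
      have "f \<in> S" using f unfolding crossing_def by blast
      consider "x \<in> A" "x' \<in> A" | "x \<notin> A" "x' \<notin> A" | "x \<in> A \<longleftrightarrow> x' \<notin> A" by blast
      then show ?thesis
      proof cases
        case 1
        then show ?thesis using P inj[OF \<open>f \<in> S\<close>] by simp
      next
        case 2
        then show ?thesis using P by simp
      next
        case 3
        then have "x \<in> ran f \<and> x \<notin> D \<and> ran f \<subseteq> D \<or> x' \<in> ran f \<and> x' \<notin> D \<and> ran f \<subseteq> D"
          using P x by (auto intro: ranI split: if_splits)
        then show ?thesis by blast
      qed
    qed
  qed
  moreover have "card (X - D) = card X - card D"
    using block_subset finite_X unfolding D_def by (meson card_Diff_subset finite_subset)
  ultimately show ?thesis unfolding D_def by simp
qed

text \<open>Let \<open>Y \<subseteq> X\<close> be such that no map of \<open>S\<close> leads from outside \<open>Y\<close> back into \<open>Y\<close>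
  (e.g. \<open>X - Y\<close> is a union of bottom blocks).\<close>

context
  fixes Y :: "nat set"
  assumes Y_sub: "Y \<subseteq> X"
    and invariant: "\<And>\<phi> y z. \<phi> \<in> S \<Longrightarrow> y \<notin> Y \<Longrightarrow> \<phi> y = Some z \<Longrightarrow> z \<notin> Y"
begin

lemma restr_hom: "\<phi> \<in> S \<Longrightarrow> \<psi> \<in> S \<Longrightarrow> restr Y (\<phi> \<cdot> \<psi>) = restr Y \<phi> \<cdot> restr Y \<psi>"
  using invariant by (intro restr_comp) blast

lemma two_coloured_restr:
  assumes "A \<inter> Y \<noteq> {}" "B \<inter> Y \<noteq> {}"
  shows "two_coloured Y (restr Y ` S) (A \<inter> Y) (B \<inter> Y)"
proof
  show "finite Y" using Y_sub finite_X by (rule finite_subset)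
  show "partial_inj Y \<phi>" if "\<phi> \<in> restr Y ` S" for \<phi>
    using that partial_inj partial_inj_restr by blast
  show "\<phi> \<cdot> \<psi> \<in> restr Y ` S" if in_S: "\<phi> \<in> restr Y ` S" "\<psi> \<in> restr Y ` S" for \<phi> \<psi>
  proof -
    obtain \<phi>' \<psi>' where "\<phi>' \<in> S" "\<psi>' \<in> S" "\<phi> = restr Y \<phi>'" "\<psi> = restr Y \<psi>'"
      using in_S by blast
    then have "\<phi> \<cdot> \<psi> = restr Y (\<phi>' \<cdot> \<psi>')" "\<phi>' \<cdot> \<psi>' \<in> S" using restr_hom closed by simp_all
    then show ?thesis by blast
  qed
  show "\<exists>\<phi>\<in>restr Y ` S. \<phi> x = Some y \<or> \<phi> y = Some x" if xy: "x \<in> Y" "y \<in> Y" for x y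
  proof -
    obtain \<phi> where "\<phi> \<in> S" "\<phi> x = Some y \<or> \<phi> y = Some x"
      using xy Y_sub semitransitive by blast
    then show ?thesis using xy by (auto simp: restr_Some)
  qed
  show "id_on (A \<inter> Y) \<in> restr Y ` S" "id_on (B \<inter> Y) \<in> restr Y ` S"
    using id_A id_B restr_id_on by (metis image_eqI)+
  show "A \<inter> Y \<union> B \<inter> Y = Y" using cover Y_sub by blast
  show "A \<inter> Y \<inter> (B \<inter> Y) = {}" using disjoint by blast
qed (use assms in simp_all)

lemma reach_restr: "x \<in> Y \<Longrightarrow> y \<in> Y \<Longrightarrow> reach (restr Y ` S) x y \<longleftrightarrow> reach S x y"
  unfolding reach_def by (auto simp: restr_Some)

lemma block_restr:
  assumes "x \<in> Y"
  shows "block Y (restr Y ` S) x = block X S x"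
proof -
  have "y \<in> Y" if "y \<in> block X S x" for y
    using that assms invariant unfolding block_def reach_def by blast
  then show ?thesis using assms Y_sub reach_restr unfolding block_def by blast
qed

lemma crossing_restr:
  "crossing (restr Y ` S) (A \<inter> Y) (B \<inter> Y) \<subseteq> restr Y ` {f \<in> crossing S A B. restr Y f \<noteq> Map.empty}"
proof
  fix f' assume f': "f' \<in> crossing (restr Y ` S) (A \<inter> Y) (B \<inter> Y)"
  then obtain \<phi> where \<phi>: "\<phi> \<in> S" "f' = restr Y \<phi>" unfolding crossing_def by blast
  have lift: "restr Y (id_on P \<cdot> \<phi> \<cdot> id_on Q) = f' \<and> id_on P \<cdot> \<phi> \<cdot> id_on Q \<in> S
      \<and> dom (id_on P \<cdot> \<phi> \<cdot> id_on Q) \<subseteq> P \<and> ran (id_on P \<cdot> \<phi> \<cdot> id_on Q) \<subseteq> Q"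
    if "id_on P \<in> S" "id_on Q \<in> S" "dom f' \<subseteq> P \<inter> Y" "ran f' \<subseteq> Q \<inter> Y" for P Q
  proof -
    have "restr Y (id_on P \<cdot> \<phi> \<cdot> id_on Q) = id_on (P \<inter> Y) \<cdot> f' \<cdot> id_on (Q \<inter> Y)"
      using that(1,2) \<phi> closed by (simp add: restr_hom restr_id_on)
    also have "\<dots> = f'" using that(3,4) by (rule id_on_sandwich)
    finally show ?thesis using that(1,2) \<phi>(1) closed by (auto simp: pcomp_Some dom_def ran_def)
  qed
  have ne: "f' \<noteq> Map.empty" using f' unfolding crossing_def by blast
  from f' consider "dom f' \<subseteq> A \<inter> Y" "ran f' \<subseteq> B \<inter> Y" | "dom f' \<subseteq> B \<inter> Y" "ran f' \<subseteq> A \<inter> Y"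
    unfolding crossing_def by blast
  then obtain f where f: "f \<in> S" "restr Y f = f'"
    and sides: "dom f \<subseteq> A \<and> ran f \<subseteq> B \<or> dom f \<subseteq> B \<and> ran f \<subseteq> A"
    using lift[OF id_A id_B] lift[OF id_B id_A] by metis
  have "f \<noteq> Map.empty" using f(2) ne restr_empty[of Map.empty Y] by auto
  then have "\<exists>f\<in>crossing S A B. restr Y f = f'" using f sides unfolding crossing_def by blast
  then show "f' \<in> restr Y ` {f \<in> crossing S A B. restr Y f \<noteq> Map.empty}"
    using ne by blast
qed

lemma card_crossing_restr:
  "card (crossing (restr Y ` S) (A \<inter> Y) (B \<inter> Y)) + card {f \<in> crossing S A B. restr Y f = Map.empty}
     \<le> card (crossing S A B)"
proof -
  let ?C = "crossing S A B" and ?K = "{f \<in> crossing S A B. restr Y f = Map.empty}"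
  have "card (crossing (restr Y ` S) (A \<inter> Y) (B \<inter> Y)) \<le> card (restr Y ` (?C - ?K))"
    using crossing_restr finite_crossing by (intro card_mono) (auto simp: set_diff_eq)
  also have "\<dots> \<le> card (?C - ?K)" using finite_crossing by (intro card_image_le) simp
  also have "\<dots> = card ?C - card ?K" using finite_crossing by (intro card_Diff_subset) auto
  finally show ?thesis using card_mono[OF finite_crossing, of ?K] by auto
qed

end

text \<open>A bottom block \<open>D \<subseteq> B\<close> is the target of at least \<open>|D|\<close> crossing maps with range inside
  \<open>D\<close>: from the top \<open>x\<^sub>a\<close> of \<open>A\<close> each \<open>d \<in> D\<close> is reached by such a map.\<close>
lemma crossing_into_bottom_block:
  assumes w: "\<forall>v\<in>X. reach S v w" and DB: "block X S w \<subseteq> B"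
  shows "card (block X S w) \<le> card {f \<in> crossing S A B. ran f \<subseteq> block X S w}"
proof -
  define D where "D = block X S w"
  have D: "D = {v. reach S w v}" unfolding D_def using bottom_block w .
  obtain xa where xa: "xa \<in> A" "\<forall>a\<in>A. reach S xa a" using exists_top[of A] A_ne cover by blast
  have "card D \<le> card {f \<in> crossing S A B. ran f \<subseteq> D}"
  proof (rule card_le_by_witness[where P = "\<lambda>d f. f xa = Some d"])
    show "finite {f \<in> crossing S A B. ran f \<subseteq> D}" using finite_crossing by simp
    show "\<exists>f\<in>{f \<in> crossing S A B. ran f \<subseteq> D}. f xa = Some d" if d: "d \<in> D" for d
    proof -
      have "reach S xa d" using xa(1) w cover d D reach_trans by blast
      then obtain f where f: "f \<in> crossing S A B" "f xa = Some d" "ran f \<subseteq> {v. reach S d v}"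
        using top_witness[OF xa] d DB unfolding D_def by blast
      have "ran f \<subseteq> D" using f(3) d D reach_trans by blast
      then show ?thesis using f by blast
    qed
  qed simp
  then show ?thesis unfolding D_def .
qed

text \<open>Peeling off a bottom block \<open>D \<subseteq> B\<close> that does not exhaust \<open>B\<close> gives a smaller instance with
  the same remaining blocks and at least \<open>|D|\<close> fewer crossing maps, since the maps with range
  in \<open>D\<close> vanish on restriction.\<close>
lemma peel_bottom:
  assumes w: "w \<in> X" "\<forall>v\<in>X. reach S v w" and DB: "block X S w \<subseteq> B"
    and BD: "B - block X S w \<noteq> {}"
  defines "Y \<equiv> X - block X S w"
  shows "two_coloured Y (restr Y ` S) (A \<inter> Y) (B \<inter> Y)"
    and "card (crossing (restr Y ` S) (A \<inter> Y) (B \<inter> Y)) + card (block X S w) \<le> card (crossing S A B)"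
    and "\<And>x. x \<in> Y \<Longrightarrow> block Y (restr Y ` S) x = block X S x"
proof -
  define D where "D = block X S w"
  have D: "D = {v. reach S w v}" unfolding D_def using bottom_block w(2) .
  have Y: "Y = X - D" unfolding Y_def D_def ..
  have stays_out: "z \<notin> Y" if "\<phi> \<in> S" "y \<notin> Y" "\<phi> y = Some z" for \<phi> y z
  proof -
    have "y \<in> D" using that maps_into Y by blast
    then have "reach S w z" using that(1,3) D reach_trans unfolding reach_def by blast
    then show ?thesis using D Y by blast
  qed
  have sub: "Y \<subseteq> X" unfolding Y by blast
  have ne: "A \<inter> Y \<noteq> {}" "B \<inter> Y \<noteq> {}" using A_ne disjoint DB BD cover unfolding Y D_def by blast+
  show "two_coloured Y (restr Y ` S) (A \<inter> Y) (B \<inter> Y)"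
    by (rule two_coloured_restr[OF sub _ ne]) (rule stays_out)
  show "block Y (restr Y ` S) x = block X S x" if "x \<in> Y" for x
    by (rule block_restr[OF sub _ that]) (rule stays_out)
  have vanish: "{f \<in> crossing S A B. ran f \<subseteq> D} \<subseteq> {f \<in> crossing S A B. restr Y f = Map.empty}"
  proof (intro subsetI CollectI conjI)
    fix f assume "f \<in> {f \<in> crossing S A B. ran f \<subseteq> D}"
    then show "f \<in> crossing S A B" "restr Y f = Map.empty" using Y by (auto intro: restr_empty)
  qed
  have "card D \<le> card {f \<in> crossing S A B. ran f \<subseteq> D}"
    using crossing_into_bottom_block[OF w(2) DB] unfolding D_def .
  also have "\<dots> \<le> card {f \<in> crossing S A B. restr Y f = Map.empty}"
    using finite_crossing vanish by (intro card_mono) auto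
  finally have "card D \<le> card {f \<in> crossing S A B. restr Y f = Map.empty}" .
  moreover have "card (crossing (restr Y ` S) (A \<inter> Y) (B \<inter> Y))
      + card {f \<in> crossing S A B. restr Y f = Map.empty} \<le> card (crossing S A B)"
    by (rule card_crossing_restr[OF sub]) (rule stays_out)
  ultimately show "card (crossing (restr Y ` S) (A \<inter> Y) (B \<inter> Y)) + card (block X S w)
      \<le> card (crossing S A B)"
    unfolding D_def by linarith
qed

text \<open>Inverting all maps reverses the preorder, so top and bottom blocks exchange their roles,
  while the blocks themselves and the number of crossing maps are unchanged.\<close>

lemma inv_map_Some_S: "\<phi> \<in> S \<Longrightarrow> inv_map \<phi> y = Some x \<longleftrightarrow> \<phi> x = Some y"
  using partial_inj inv_map_Some by blast

lemma two_coloured_inverse: "two_coloured X (inv_map ` S) A B"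
proof
  show "partial_inj X \<phi>" if "\<phi> \<in> inv_map ` S" for \<phi>
    using that partial_inj partial_inj_inv_map by blast
  show "\<phi> \<cdot> \<psi> \<in> inv_map ` S" if in_S: "\<phi> \<in> inv_map ` S" "\<psi> \<in> inv_map ` S" for \<phi> \<psi>
  proof -
    obtain \<phi>' \<psi>' where "\<phi>' \<in> S" "\<psi>' \<in> S" "\<phi> = inv_map \<phi>'" "\<psi> = inv_map \<psi>'"
      using in_S by blast
    then have "\<phi> \<cdot> \<psi> = inv_map (\<psi>' \<cdot> \<phi>')" "\<psi>' \<cdot> \<phi>' \<in> S"
      using inv_map_comp[OF partial_inj partial_inj] closed by simp_all
    then show ?thesis by blast
  qed
  show "\<exists>\<phi>\<in>inv_map ` S. \<phi> x = Some y \<or> \<phi> y = Some x" if "x \<in> X" "y \<in> X" for x y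
    using semitransitive[OF that] inv_map_Some_S by blast
  show "id_on A \<in> inv_map ` S" "id_on B \<in> inv_map ` S"
    using id_A id_B inv_map_id_on cover by (metis Un_upper1 Un_upper2 image_eqI)+
qed (use finite_X cover disjoint A_ne B_ne in simp_all)

lemma reach_inverse: "reach (inv_map ` S) x y \<longleftrightarrow> reach S y x"
  unfolding reach_def using inv_map_Some_S by blast

lemma block_inverse: "block X (inv_map ` S) x = block X S x"
  unfolding block_def reach_inverse by blast

lemma inv_map_crossing:
  assumes "f \<in> S"
  shows "inv_map f \<in> crossing (inv_map ` S) A B \<longleftrightarrow> f \<in> crossing S A B"
proof -
  have dom: "dom (inv_map f) = ran f" and ran: "ran (inv_map f) = dom f"
    using partial_inj[OF assms] by (simp_all add: dom_inv_map ran_inv_map)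
  have "ran f = {} \<longleftrightarrow> dom f = {}" by (auto simp: ran_def dom_def) (metis option.exhaust)
  then have "inv_map f = Map.empty \<longleftrightarrow> f = Map.empty"
    using dom by (metis dom_eq_empty_conv)
  then show ?thesis using assms dom ran unfolding crossing_def by auto
qed

lemma card_crossing_inverse: "card (crossing (inv_map ` S) A B) = card (crossing S A B)"
proof -
  have "crossing (inv_map ` S) A B = inv_map ` crossing S A B"
  proof (intro equalityI subsetI)
    fix g assume g: "g \<in> crossing (inv_map ` S) A B"
    then obtain f where f: "f \<in> S" "g = inv_map f" unfolding crossing_def by blast
    then show "g \<in> inv_map ` crossing S A B" using g inv_map_crossing by blast
  next
    fix g assume "g \<in> inv_map ` crossing S A B"
    then obtain f where f: "f \<in> crossing S A B" "g = inv_map f" by blast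
    moreover have "f \<in> S" using f(1) unfolding crossing_def by blast
    ultimately show "g \<in> crossing (inv_map ` S) A B" using inv_map_crossing by blast
  qed
  moreover have "inj_on inv_map (crossing S A B)"
    by (rule inj_on_inverseI[where g = inv_map])
       (use partial_inj inv_map_inv_map in \<open>auto simp: crossing_def\<close>)
  ultimately show ?thesis by (simp add: card_image)
qed

end

section \<open>The bound \<open>|N| \<ge> |X| - |X\<^sub>i|\<close>\<close>

definition has_crossing_bound :: "nat set \<Rightarrow> (nat \<rightharpoonup> nat) set \<Rightarrow> nat set \<Rightarrow> nat set \<Rightarrow> bool" where
  "has_crossing_bound X S A B \<longleftrightarrow> (\<forall>x\<in>X. card X - card (block X S x) \<le> card (crossing S A B))"

context two_coloured
begin

text \<open>Peeling a bottom block \<open>D \<subseteq> B\<close> not containing \<open>x\<^sub>0\<close>: \<open>|X| - |D|\<close> points and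
  \<open>|N| - |D|\<close> crossing maps remain, and the block of \<open>x\<^sub>0\<close> is unchanged.\<close>
lemma peel_bound:
  assumes IH: "\<forall>X' S' A' B'. card X' < card X \<longrightarrow> two_coloured X' S' A' B' \<longrightarrow> has_crossing_bound X' S' A' B'"
    and w: "w \<in> X" "\<forall>v\<in>X. reach S v w" and D: "block X S w \<subseteq> B" "B - block X S w \<noteq> {}"
    and x0: "x0 \<in> X - block X S w"
  shows "card X - card (block X S x0) \<le> card (crossing S A B)"
proof -
  define Y where "Y = X - block X S w"
  note peel = peel_bottom[OF w D, folded Y_def]
  have x0Y: "x0 \<in> Y" using x0 unfolding Y_def .
  have same_block: "block Y (restr Y ` S) x0 = block X S x0" using peel(3)[OF x0Y] .
  have fin: "finite (block X S w)" using block_subset finite_X by (rule finite_subset)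
  have card_Y: "card Y = card X - card (block X S w)"
    unfolding Y_def using card_Diff_subset[OF fin block_subset] .
  have "card Y < card X"
    unfolding Y_def using block_mem[OF w(1)] w(1) finite_X by (intro psubset_card_mono) auto
  then have "card Y - card (block X S x0) \<le> card (crossing (restr Y ` S) (A \<inter> Y) (B \<inter> Y))"
    using IH peel(1) x0Y same_block unfolding has_crossing_bound_def by metis
  moreover have "card (block X S x0) \<le> card Y"
    using card_mono[OF two_coloured.finite_X[OF peel(1)] two_coloured.block_subset[OF peel(1), of x0]]
    unfolding same_block .
  ultimately show ?thesis using peel(2) card_Y card_mono[OF finite_X block_subset, of w] by linarith
qed

text \<open>A bottom block that is not a whole colour class either meets both colours, and then
  \<open>|N| \<ge> |X|\<close>, or it can be peeled off.\<close>
lemma bottom_not_colour_bound: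
  assumes IH: "\<forall>X' S' A' B'. card X' < card X \<longrightarrow> two_coloured X' S' A' B' \<longrightarrow> has_crossing_bound X' S' A' B'"
    and w: "w \<in> X" "\<forall>v\<in>X. reach S v w" and D: "block X S w \<noteq> A" "block X S w \<noteq> B"
    and x0: "x0 \<in> X - block X S w"
  shows "card X - card (block X S x0) \<le> card (crossing S A B)"
proof -
  have bottom: "\<forall>v\<in>X. reach S v y" if "y \<in> block X S w" for y
  proof
    fix v assume "v \<in> X"
    then have "reach S v w" using w(2) by blast
    moreover have "reach S w y" using that unfolding block_def by blast
    ultimately show "reach S v y" by (rule reach_trans)
  qed
  have "block X S w \<subseteq> A \<union> B" using block_subset cover by simp
  then consider "block X S w \<inter> A \<noteq> {}" "block X S w \<inter> B \<noteq> {}" | "block X S w \<subseteq> B"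
    | "block X S w \<subseteq> A"
    by blast
  then show ?thesis
  proof cases
    case 1
    then obtain a b where "a \<in> block X S w \<inter> A" "b \<in> block X S w \<inter> B" by blast
    then have "card X \<le> card (crossing S A B)" using bottom bottom_mixed_bound by blast
    then show ?thesis by linarith
  next
    case 2
    then have "B - block X S w \<noteq> {}" using D(2) by blast
    then show ?thesis using peel_bound[OF IH w 2 _ x0] by blast
  next
    case 3
    then have "A - block X S w \<noteq> {}" using D(1) by blast
    then have "card X - card (block X S x0) \<le> card (crossing S B A)"
      using two_coloured.peel_bound[OF swap IH w 3 _ x0] by blast
    then show ?thesis by (simp only: crossing_swap)
  qed
qed

lemma top_colour_case:
  assumes w: "w \<in> X" "\<forall>v\<in>X. reach S v w" and u: "u \<in> X" "\<forall>v\<in>X. reach S u v"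
    and x0: "x0 \<in> block X S w" "x0 \<notin> block X S u" and U: "block X S u = A \<or> block X S u = B"
  shows "card X - card (block X S x0) \<le> card (crossing S A B)"
proof -
  have disj: "block X S w \<inter> block X S u = {}"
  proof (rule ccontr)
    assume "block X S w \<inter> block X S u \<noteq> {}"
    then obtain v where "v \<in> block X S w" "v \<in> block X S u" by blast
    then have "block X S w = block X S u" using block_eq by metis
    then show False using x0 by simp
  qed
  have top: "\<forall>a\<in>block X S u. \<forall>v\<in>X. reach S a v"
  proof (intro ballI)
    fix a v assume "a \<in> block X S u" "v \<in> X"
    then have "reach S a u" "reach S u v" using u(2) unfolding block_def by blast+
    then show "reach S a v" by (rule reach_trans)
  qed
  from U have "card X - card (block X S w) \<le> card (crossing S A B)"
  proof
    assume "block X S u = A"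
    then show ?thesis using top_colour_bound[OF w] top disj by simp
  next
    assume "block X S u = B"
    then have "card X - card (block X S w) \<le> card (crossing S B A)"
      using two_coloured.top_colour_bound[OF swap w] top disj by simp
    then show ?thesis by (simp only: crossing_swap)
  qed
  then show ?thesis using block_eq[OF x0(1)] by simp
qed

lemma block_of_extremes:
  assumes w: "\<forall>v\<in>X. reach S v w" and u: "\<forall>v\<in>X. reach S u v"
    and x: "x \<in> block X S w" "x \<in> block X S u"
  shows "block X S x = X"
proof (intro equalityI subsetI)
  fix v assume v: "v \<in> X"
  then have "reach S x u" "reach S u v" "reach S v w" "reach S w x"
    using x u w unfolding block_def by blast+
  then show "v \<in> block X S x" using v reach_trans unfolding block_def by blast
qed (rule block_subset[THEN subsetD])

lemma extreme_colour_blocks: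
  assumes w: "w \<in> X" "\<forall>v\<in>X. reach S v w" and u: "u \<in> X" "\<forall>v\<in>X. reach S u v"
    and W: "block X S w = A \<or> block X S w = B" and U: "block X S u = A \<or> block X S u = B"
    and x: "x \<in> X"
  shows "x \<in> block X S w \<or> x \<in> block X S u"
proof (cases "block X S w = block X S u")
  case True
  then have "reach S w u" using block_mem[OF u(1)] unfolding block_def by blast
  then have "reach S w x" using u(2) x by (blast intro: reach_trans)
  then show ?thesis using x w(2) unfolding block_def by blast
next
  case False
  then show ?thesis using W U x cover by blast
qed

end

text \<open>The main induction: unless the block of \<open>x\<^sub>0\<close> is everything, either an extreme block avoiding
  \<open>x\<^sub>0\<close> is not a colour class (and the bottom case applies, possibly to the inverse semigroup),
  or \<open>x\<^sub>0\<close> lies in one extreme block and the other one is a colour class.\<close>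
theorem two_coloured_crossing_bound: "two_coloured X S A B \<Longrightarrow> has_crossing_bound X S A B"
proof (induction "card X" arbitrary: X S A B rule: less_induct)
  case less
  interpret two_coloured X S A B by (fact less.prems)
  have IH: "\<forall>X' S' A' B'. card X' < card X \<longrightarrow> two_coloured X' S' A' B' \<longrightarrow> has_crossing_bound X' S' A' B'"
    using less.hyps by blast
  show ?case unfolding has_crossing_bound_def
  proof
    fix x0 assume x0: "x0 \<in> X"
    obtain w where w: "w \<in> X" "\<forall>v\<in>X. reach S v w" using exists_bottom[of X] x0 by blast
    obtain u where u: "u \<in> X" "\<forall>v\<in>X. reach S u v" using exists_top[of X] x0 by blast
    have dual_u: "\<forall>v\<in>X. reach (inv_map ` S) v u" and dual_w: "\<forall>v\<in>X. reach (inv_map ` S) w v"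
      using u w by (simp_all add: reach_inverse)
    note dual = two_coloured_inverse block_inverse card_crossing_inverse
    consider "x0 \<in> block X S w" "x0 \<in> block X S u"
      | "x0 \<notin> block X S w" "block X S w \<noteq> A" "block X S w \<noteq> B"
      | "x0 \<notin> block X S u" "block X S u \<noteq> A" "block X S u \<noteq> B"
      | "x0 \<in> block X S w" "x0 \<notin> block X S u" "block X S u = A \<or> block X S u = B"
      | "x0 \<in> block X S u" "x0 \<notin> block X S w" "block X S w = A \<or> block X S w = B"
      using extreme_colour_blocks[OF w u _ _ x0] by blast
    then show "card X - card (block X S x0) \<le> card (crossing S A B)"
    proof cases
      case 1
      then show ?thesis using block_of_extremes[OF w(2) u(2)] by simp
    next
      case 2
      then show ?thesis using bottom_not_colour_bound[OF IH w] x0 by blast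
    next
      case 3
      then show ?thesis using two_coloured.bottom_not_colour_bound[OF dual(1) IH u(1) dual_u] x0
        unfolding dual(2,3) by blast
    next
      case 4
      then show ?thesis using top_colour_case[OF w u] by blast
    next
      case 5
      then show ?thesis using two_coloured.top_colour_case[OF dual(1) u(1) dual_u w(1) dual_w]
        unfolding dual(2,3) by blast
    qed
  qed
qed

section \<open>Back to the symmetric inverse semigroup\<close>

text \<open>\<open>ppow f k\<close> is the power \<open>f\<^sup>k\<^sup>+\<^sup>1\<close>.\<close>
fun ppow :: "(nat \<rightharpoonup> nat) \<Rightarrow> nat \<Rightarrow> (nat \<rightharpoonup> nat)" where
  "ppow f 0 = f"
| "ppow f (Suc k) = ppow f k \<cdot> f"

lemma ppow_in: "subsemigroup S \<Longrightarrow> f \<in> S \<Longrightarrow> ppow f k \<in> S"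
  by (induction k) (auto simp: subsemigroup_def)

lemma ppow_fixed: "f x = Some x \<Longrightarrow> ppow f k x = Some x"
  by (induction k) (auto simp: pcomp_Some)

lemma ppow_add: "ppow f a \<cdot> ppow f b = ppow f (a + b + 1)"
  by (induction b) (simp_all add: pcomp_assoc[symmetric])

text \<open>In a finite semigroup every element has an idempotent power: once the powers repeat with
  period \<open>p\<close> from index \<open>i\<close> on, the power \<open>f\<^sup>m\<^sup>+\<^sup>1\<close> with \<open>m \<ge> i\<close> and \<open>p dvd m + 1\<close> is idempotent.\<close>
lemma ppow_idempotent:
  assumes "finite S" "subsemigroup S" "f \<in> S"
  shows "\<exists>m. ppow f m \<cdot> ppow f m = ppow f m"
proof -
  have "finite (range (ppow f))"
    by (rule finite_subset[OF _ assms(1)]) (use ppow_in[OF assms(2,3)] in blast)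
  then obtain i j where "i \<noteq> j" "ppow f i = ppow f j"
    using finite_imageD[of "ppow f" UNIV] unfolding inj_on_def by blast
  then obtain i p where p: "p > 0" and rep: "ppow f (i + p) = ppow f i"
    by (metis less_imp_add_positive linorder_neqE_nat)
  have shift: "ppow f (i + t + p) = ppow f (i + t)" for t
    by (induction t) (use rep in \<open>simp_all add: add.commute add.left_commute\<close>)
  have periodic: "ppow f (i + t + c * p) = ppow f (i + t)" for t c
  proof (induction c arbitrary: t)
    case (Suc c)
    have "ppow f (i + t + Suc c * p) = ppow f (i + (t + p) + c * p)" by (simp add: algebra_simps)
    also have "\<dots> = ppow f (i + t)" using Suc.IH[of "t + p"] shift[of t] by (simp add: add.assoc)
    finally show ?case .
  qed simp
  define m where "m = Suc i * p - 1"
  have "i \<le> i * p" "Suc i * p = p + i * p" using p by simp_all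
  then have "i \<le> m" using p unfolding m_def by linarith
  have "Suc m = Suc i * p" using p unfolding m_def by simp
  have "ppow f m \<cdot> ppow f m = ppow f (m + m + 1)" by (rule ppow_add)
  also have "m + m + 1 = i + (m - i) + Suc i * p" using \<open>Suc m = _\<close> \<open>i \<le> m\<close> by simp
  also have "ppow f \<dots> = ppow f m" using periodic[of "m - i" "Suc i"] \<open>i \<le> m\<close> by simp
  finally show ?thesis by blast
qed

lemma fixed_by_idempotent:
  assumes "finite S" "subsemigroup S" "\<phi> \<in> S" "\<phi> x = Some x"
  shows "\<exists>e\<in>nz_idempotents S. e x = Some x"
proof -
  obtain m where "ppow \<phi> m \<cdot> ppow \<phi> m = ppow \<phi> m" using ppow_idempotent assms(1-3) by blast
  moreover have "ppow \<phi> m x = Some x" using assms(4) by (rule ppow_fixed)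
  ultimately show ?thesis using ppow_in[OF assms(2,3)] unfolding nz_idempotents_def by force
qed

text \<open>If the only non-zero idempotents are the partial identities on \<open>A\<close> and \<open>B\<close>, where
  \<open>A \<union> B = X\<close> and neither is all of \<open>X\<close>, then \<open>A\<close> and \<open>B\<close> are disjoint: otherwise their product,
  the partial identity on \<open>A \<inter> B\<close>, would be a third non-zero idempotent or make one of them total.\<close>
lemma idempotent_domains_disjoint:
  assumes ss: "subsemigroup S" and idem: "nz_idempotents S = {id_on A, id_on B}"
    and cover: "A \<union> B = X" and proper: "A \<noteq> X" "B \<noteq> X"
  shows "A \<inter> B = {}"
proof (rule ccontr)
  assume ne: "A \<inter> B \<noteq> {}"
  have "id_on A \<in> S" "id_on B \<in> S" using idem unfolding nz_idempotents_def by blast+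
  then have "id_on (A \<inter> B) \<in> S" using ss id_on_comp unfolding subsemigroup_def by metis
  moreover have "id_on (A \<inter> B) \<cdot> id_on (A \<inter> B) = id_on (A \<inter> B)" by (simp add: id_on_comp)
  moreover have "id_on (A \<inter> B) \<noteq> Map.empty" using ne dom_id_on[of "A \<inter> B"] by (metis dom_empty)
  ultimately have "id_on (A \<inter> B) \<in> {id_on A, id_on B}" using idem unfolding nz_idempotents_def by blast
  then have "A \<inter> B = A \<or> A \<inter> B = B" using dom_id_on by (metis insertE singletonD)
  then show False using cover proper by blast
qed

text \<open>The two non-zero idempotents of a semitransitive semigroup without permutations are the
  partial identities of a splitting of \<open>X\<close> into two colour classes: every point is fixed by some
  map, hence by one of the idempotents.\<close>
lemma two_coloured_by_idempotents:
  assumes SI: "S \<subseteq> symInv n - symGrp n" and ss: "subsemigroup S" and semi: "semitransitive n S"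
    and idem: "nz_idempotents S = {g, h}"
  shows "two_coloured {1..n} S (dom g) (dom h) \<and> g = id_on (dom g) \<and> h = id_on (dom h)"
proof -
  let ?X = "{1..n}"
  have pinj: "partial_inj ?X \<phi>" if "\<phi> \<in> S" for \<phi>
    using SI that unfolding symInv_def pinj_def partial_inj_def by blast
  have finS: "finite S"
    by (rule finite_subset[OF _ finite_partial_injs[of ?X]]) (use pinj in auto)
  have e: "e \<in> S" "e = id_on (dom e)" "dom e \<noteq> {}" "dom e \<subseteq> ?X" "dom e \<noteq> ?X"
    if "e \<in> nz_idempotents S" for e
  proof -
    show e: "e \<in> S" using that unfolding nz_idempotents_def by blast
    show "e = id_on (dom e)"
      by (rule idempotent_is_id_on[OF pinj[OF e]]) (use that in \<open>simp add: nz_idempotents_def\<close>)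
    show "dom e \<noteq> {}" using that unfolding nz_idempotents_def by simp
    show "dom e \<subseteq> ?X" using pinj[OF e] unfolding partial_inj_def by blast
    show "dom e \<noteq> ?X" using SI e unfolding symGrp_def by blast
  qed
  have "g \<in> nz_idempotents S" "h \<in> nz_idempotents S" using idem by simp_all
  note g = e[OF this(1)] and h = e[OF this(2)]
  have cover: "dom g \<union> dom h = ?X"
  proof
    show "?X \<subseteq> dom g \<union> dom h"
    proof
      fix x assume "x \<in> ?X"
      then obtain \<phi> where "\<phi> \<in> S" "\<phi> x = Some x" using semi unfolding semitransitive_def by blast
      then obtain e where "e \<in> {g, h}" "e x = Some x" using fixed_by_idempotent[OF finS ss] idem by metis
      then show "x \<in> dom g \<union> dom h" by blast
    qed
  qed (use g h in blast)
  have "nz_idempotents S = {id_on (dom g), id_on (dom h)}"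
    unfolding idem by (rule arg_cong2[where f = "\<lambda>a b. {a, b}", OF g(2) h(2)])
  then have disjoint: "dom g \<inter> dom h = {}"
    by (rule idempotent_domains_disjoint[OF ss _ cover g(5) h(5)])
  have "id_on (dom g) \<in> S" "id_on (dom h) \<in> S"
    using g(1) h(1) by (simp_all only: g(2)[symmetric] h(2)[symmetric])
  then have "two_coloured ?X S (dom g) (dom h)"
    by unfold_locales
      (use pinj ss semi cover disjoint g(3) h(3) in \<open>auto simp: subsemigroup_def semitransitive_def\<close>)
  then show ?thesis using g(2) h(2) by blast
qed

theorem lemma3p3:
  fixes n :: nat and S :: "(nat \<rightharpoonup> nat) set" and g h :: "nat \<rightharpoonup> nat"
  assumes "n \<ge> 2"
    and "S \<subseteq> symInv n - symGrp n"
    and "subsemigroup S"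
    and "semitransitive n S"
    and "card S \<le> 2 * n"
    and "g \<noteq> h" and "nz_idempotents S = {g, h}"
  shows "card ((sandwich g S h \<union> sandwich h S g) - {Map.empty})
           \<ge> n - Min (card ` blocks n S)"
proof -
  obtain tc: "two_coloured {1..n} S (dom g) (dom h)" and gh: "g = id_on (dom g)" "h = id_on (dom h)"
    using two_coloured_by_idempotents[OF assms(2,3,4,7)] by blast
  have N: "(sandwich g S h \<union> sandwich h S g) - {Map.empty} = crossing S (dom g) (dom h)"
    using two_coloured.crossing_eq_sandwich[OF tc, folded gh] .
  have blocks: "blocks n S = block {1..n} S ` {1..n}"
    unfolding blocks_def block_def ..
  obtain x0 where x0: "x0 \<in> {1..n}" "Min (card ` blocks n S) = card (block {1..n} S x0)"
    using Min_in[of "card ` blocks n S"] assms(1) unfolding blocks by fastforce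
  show ?thesis
    using two_coloured_crossing_bound[OF tc] x0 unfolding has_crossing_bound_def N by simp
qed

end
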